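(* A maximal ideal $M$ of $B_1(\mathbb{R})$ is real if and only if it is fixed, i.e. if and only if $M=\{f\in B_1(\mathbb{R}): f(p)=0\}$ for some $p\in\mathbb{R}$.
   Context: $B_1(\mathbb{R})$ denotes the ring (pointwise operations and order) of Baire one functions $\mathbb{R}\to\mathbb{R}$, i.e. pointwise limits of sequences of continuous functions. For $f$, $Z(f)=\{x: f(x)=0\}$. A proper ideal $I$ is fixed if $\bigcap_{f\in I}Z(f)\neq\emptyset$. For a maximal ideal $M$, $M(f)=f+M$, and $\Phi:\mathbb{R}\to B_1(\mathbb{R})/M$, $\Phi(r)=M(\mathbf r)$ ($\mathbf r$ the constant function $r$); $M$ is real if $\Phi$ is surjective. *)

theory Defs
  imports "HOL-Analysis.Analysis" "HOL-Algebra.Algebra"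
begin

definition baire_one :: "(real \<Rightarrow> real) set" where
  "baire_one = {f. \<exists>g :: nat \<Rightarrow> real \<Rightarrow> real.
      (\<forall>n. continuous_on UNIV (g n)) \<and> (\<forall>x. (\<lambda>n. g n x) \<longlonglongrightarrow> f x)}"

definition B1 :: "(real \<Rightarrow> real) ring" where
  "B1 = \<lparr> carrier = baire_one,
          mult = (\<lambda>f g x. f x * g x),
          one = (\<lambda>x. 1),
          ring.zero = (\<lambda>x. 0),
          ring.add = (\<lambda>f g x. f x + g x) \<rparr>"

definition zero_set :: "(real \<Rightarrow> real) \<Rightarrow> real set" where
  "zero_set f = {x. f x = 0}"

definition fixed_ideal :: "(real \<Rightarrow> real) set \<Rightarrow> bool" where
  "fixed_ideal I \<longleftrightarrow> (\<Inter>f\<in>I. zero_set f) \<noteq> {}"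

definition Phi :: "(real \<Rightarrow> real) set \<Rightarrow> real \<Rightarrow> (real \<Rightarrow> real) set" where
  "Phi M r = M +>\<^bsub>B1\<^esub> (\<lambda>x. r)"

definition real_ideal :: "(real \<Rightarrow> real) set \<Rightarrow> bool" where
  "real_ideal M \<longleftrightarrow> Phi M ` UNIV = carrier (B1 Quot M)"

end

theory Submission
  imports Defs
begin

text \<open>A fixed maximal ideal lies in, hence equals, a point ideal \<open>{f. f p = 0}\<close>, modulo
  which every \<open>f\<close> is congruent to the constant \<open>f p\<close>; so it is real. Conversely, if \<open>M\<close> is real
  then the identity is congruent to some constant \<open>r\<close>, so \<open>x - r \<in> M\<close>; were \<open>M\<close> free, some
  \<open>f \<in> M\<close> would have \<open>f r \<noteq> 0\<close>, and \<open>(x - r)\<^sup>2 + f\<^sup>2 \<in> M\<close> would vanish nowhere. Its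
  reciprocal is again Baire one, so \<open>M\<close> would contain \<open>1\<close>.\<close>

lemma B1_simps [simp]:
  "carrier B1 = baire_one" "mult B1 = (\<lambda>f g x. f x * g x)" "one B1 = (\<lambda>x. 1)"
  "ring.zero B1 = (\<lambda>x. 0)" "ring.add B1 = (\<lambda>f g x. f x + g x)"
  by (simp_all add: B1_def)

lemma baire_one_const [simp]: "(\<lambda>x. c) \<in> baire_one"
  unfolding baire_one_def by (intro CollectI exI[of _ "\<lambda>n x. c"]) auto

lemma baire_one_ident: "(\<lambda>x. x) \<in> baire_one"
  unfolding baire_one_def by (intro CollectI exI[of _ "\<lambda>n x. x"]) auto

lemma baire_one_add [simp]:
  assumes "f \<in> baire_one" "g \<in> baire_one"
  shows "(\<lambda>x. f x + g x) \<in> baire_one"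
proof -
  obtain a b :: "nat \<Rightarrow> real \<Rightarrow> real" where
    "\<forall>n. continuous_on UNIV (a n)" "\<forall>x. (\<lambda>n. a n x) \<longlonglongrightarrow> f x"
    "\<forall>n. continuous_on UNIV (b n)" "\<forall>x. (\<lambda>n. b n x) \<longlonglongrightarrow> g x"
    using assms unfolding baire_one_def by blast
  then show ?thesis unfolding baire_one_def
    by (intro CollectI exI[of _ "\<lambda>n x. a n x + b n x"]) (auto intro: continuous_intros tendsto_intros)
qed

lemma baire_one_mult [simp]:
  assumes "f \<in> baire_one" "g \<in> baire_one"
  shows "(\<lambda>x. f x * g x) \<in> baire_one"
proof -
  obtain a b :: "nat \<Rightarrow> real \<Rightarrow> real" where
    "\<forall>n. continuous_on UNIV (a n)" "\<forall>x. (\<lambda>n. a n x) \<longlonglongrightarrow> f x"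
    "\<forall>n. continuous_on UNIV (b n)" "\<forall>x. (\<lambda>n. b n x) \<longlonglongrightarrow> g x"
    using assms unfolding baire_one_def by blast
  then show ?thesis unfolding baire_one_def
    by (intro CollectI exI[of _ "\<lambda>n x. a n x * b n x"]) (auto intro: continuous_intros tendsto_intros)
qed

lemma baire_one_uminus [simp]: "f \<in> baire_one \<Longrightarrow> (\<lambda>x. - f x) \<in> baire_one"
  using baire_one_mult[OF baire_one_const[of "-1"], of f] by simp

lemma baire_one_diff [simp]:
  "f \<in> baire_one \<Longrightarrow> g \<in> baire_one \<Longrightarrow> (\<lambda>x. f x - g x) \<in> baire_one"
  using baire_one_add[of f "\<lambda>x. - g x"] by simp

text \<open>The continuous approximants \<open>a\<^sub>n / (a\<^sub>n\<^sup>2 + 1/(n+1))\<close> avoid division by zero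
  and converge to \<open>h / h\<^sup>2\<close> wherever \<open>h\<close> does not vanish.\<close>
lemma baire_one_inverse:
  assumes "h \<in> baire_one" "\<And>x. h x \<noteq> 0"
  shows "(\<lambda>x. 1 / h x) \<in> baire_one"
proof -
  obtain a :: "nat \<Rightarrow> real \<Rightarrow> real" where
    a: "\<forall>n. continuous_on UNIV (a n)" "\<forall>x. (\<lambda>n. a n x) \<longlonglongrightarrow> h x"
    using assms(1) unfolding baire_one_def by blast
  define g where "g n x = a n x / ((a n x)\<^sup>2 + 1 / (real n + 1))" for n x
  have "continuous_on UNIV (g n)" for n
  proof -
    have "(a n x)\<^sup>2 + 1 / (real n + 1) \<noteq> 0" for x
      by (intro less_imp_neq[symmetric] add_nonneg_pos) auto
    then show ?thesis
      unfolding g_def using a(1) by (intro continuous_intros) auto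
  qed
  moreover have "(\<lambda>n. g n x) \<longlonglongrightarrow> 1 / h x" for x
  proof -
    have "(\<lambda>n. 1 / (real n + 1)) \<longlonglongrightarrow> 0"
      using LIMSEQ_inverse_real_of_nat by (simp add: inverse_eq_divide add.commute)
    then have "(\<lambda>n. g n x) \<longlonglongrightarrow> h x / ((h x)\<^sup>2 + 0)"
      unfolding g_def using a(2) assms(2)[of x] by (intro tendsto_intros) auto
    then show ?thesis
      using assms(2)[of x] by (simp add: power2_eq_square)
  qed
  ultimately show ?thesis
    unfolding baire_one_def by blast
qed

lemma cring_B1: "cring B1"
proof (rule cringI)
  show "abelian_group B1"
  proof (rule abelian_groupI)
    fix f assume "f \<in> carrier B1"
    then show "\<exists>g\<in>carrier B1. g \<oplus>\<^bsub>B1\<^esub> f = \<zero>\<^bsub>B1\<^esub>"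
      by (intro bexI[of _ "\<lambda>x. - f x"]) auto
  qed (auto simp: algebra_simps)
  show "comm_monoid B1"
    by (rule comm_monoidI) (auto simp: algebra_simps)
qed (auto simp: algebra_simps)

interpretation B1: cring B1
  by (rule cring_B1)

lemma B1_a_inv [simp]: "f \<in> baire_one \<Longrightarrow> \<ominus>\<^bsub>B1\<^esub> f = (\<lambda>x. - f x)"
  by (rule B1.minus_equality) auto

lemma B1_a_minus [simp]:
  "f \<in> baire_one \<Longrightarrow> g \<in> baire_one \<Longrightarrow> f \<ominus>\<^bsub>B1\<^esub> g = (\<lambda>x. f x - g x)"
  by (simp add: a_minus_def)

definition point_ideal :: "real \<Rightarrow> (real \<Rightarrow> real) set" where
  "point_ideal p = {f \<in> baire_one. f p = 0}"

lemma ideal_point_ideal: "ideal (point_ideal p) B1"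
proof (rule idealI)
  show "subgroup (point_ideal p) (add_monoid B1)"
    by (rule B1.add.subgroupI) (auto simp: point_ideal_def a_inv_def[symmetric] intro!: exI[of _ "\<lambda>x. 0"])
qed (auto simp: point_ideal_def B1.ring_axioms)

lemma point_ideal_neq_carrier: "point_ideal p \<noteq> carrier B1"
  using baire_one_const[of 1] by (auto simp: point_ideal_def)

lemma maximalideal_eq_point_ideal:
  assumes "maximalideal M B1" and "p \<in> (\<Inter>f\<in>M. zero_set f)"
  shows "M = point_ideal p"
proof -
  interpret maximalideal M B1 by (rule assms(1))
  have "M \<subseteq> point_ideal p"
    using a_subset assms(2) by (auto simp: point_ideal_def zero_set_def)
  then show ?thesis
    using I_maximal[OF ideal_point_ideal] point_ideal_neq_carrier
    by (auto simp: point_ideal_def)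
qed

lemma maximalideal_fixed_iff_point_ideal:
  assumes "maximalideal M B1"
  shows "fixed_ideal M \<longleftrightarrow> (\<exists>p. M = point_ideal p)"
proof
  assume "fixed_ideal M"
  then show "\<exists>p. M = point_ideal p"
    unfolding fixed_ideal_def using maximalideal_eq_point_ideal[OF assms] by blast
next
  assume "\<exists>p. M = point_ideal p"
  then show "fixed_ideal M"
    by (auto simp: fixed_ideal_def zero_set_def point_ideal_def)
qed

lemma Phi_eq_iff:
  assumes "ideal M B1" "f \<in> baire_one"
  shows "Phi M r = M +>\<^bsub>B1\<^esub> f \<longleftrightarrow> (\<lambda>x. r - f x) \<in> M"
proof -
  have "(\<lambda>x. r) \<in> carrier B1" "f \<in> carrier B1"
    using assms(2) by simp_all
  from B1.quotient_eq_iff_same_a_r_cos[OF assms(1) this] show ?thesis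
    by (simp add: Phi_def assms(2))
qed

lemma real_ideal_iff:
  assumes "ideal M B1"
  shows "real_ideal M \<longleftrightarrow> (\<forall>f\<in>baire_one. \<exists>r. (\<lambda>x. r - f x) \<in> M)"
proof -
  have carrier: "carrier (B1 Quot M) = (\<lambda>f. M +>\<^bsub>B1\<^esub> f) ` baire_one"
    by (auto simp: FactRing_def A_RCOSETS_def')
  then have "Phi M ` UNIV \<subseteq> carrier (B1 Quot M)"
    by (auto simp: Phi_def)
  then have "real_ideal M \<longleftrightarrow> (\<lambda>f. M +>\<^bsub>B1\<^esub> f) ` baire_one \<subseteq> range (Phi M)"
    unfolding real_ideal_def carrier by blast
  also have "\<dots> \<longleftrightarrow> (\<forall>f\<in>baire_one. \<exists>r. Phi M r = M +>\<^bsub>B1\<^esub> f)"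
    by (auto simp: image_subset_iff image_iff eq_commute)
  finally show ?thesis
    using Phi_eq_iff[OF assms] by simp
qed

lemma real_ideal_point_ideal: "real_ideal (point_ideal p)"
  unfolding real_ideal_iff[OF ideal_point_ideal]
proof
  fix f :: "real \<Rightarrow> real"
  assume "f \<in> baire_one"
  then show "\<exists>r. (\<lambda>x. r - f x) \<in> point_ideal p"
    by (intro exI[of _ "f p"]) (simp add: point_ideal_def)
qed

lemma ideal_nonvanishing_eq_carrier:
  assumes "ideal I B1" "h \<in> I" "\<And>x. h x \<noteq> 0"
  shows "I = carrier B1"
proof -
  interpret ideal I B1 by (rule assms(1))
  have "(\<lambda>x. 1 / h x) \<in> carrier B1"
    using Icarr[OF assms(2)] baire_one_inverse assms(3) by simp
  from I_l_closed[OF assms(2) this] have "(\<lambda>x. 1 / h x * h x) \<in> I"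
    by simp
  then have "\<one>\<^bsub>B1\<^esub> \<in> I"
    using assms(3) by simp
  then show ?thesis
    by (rule one_imp_carrier)
qed

lemma real_ideal_imp_fixed:
  assumes "ideal M B1" "M \<noteq> carrier B1" "real_ideal M"
  shows "fixed_ideal M"
proof (rule ccontr)
  interpret ideal M B1 by (rule assms(1))
  assume "\<not> fixed_ideal M"
  obtain r where "(\<lambda>x. r - x) \<in> M"
    using assms(3) baire_one_ident by (auto simp: real_ideal_iff[OF assms(1)])
  moreover obtain f where "f \<in> M" "f r \<noteq> 0"
    using \<open>\<not> fixed_ideal M\<close> by (auto simp: fixed_ideal_def zero_set_def)
  ultimately have "(\<lambda>x. (r - x) * (r - x) + f x * f x) \<in> M"
    using I_l_closed Icarr a_closed by simp
  moreover have "(r - x) * (r - x) + f x * f x \<noteq> 0" for x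
    using \<open>f r \<noteq> 0\<close> by (cases "x = r") (auto simp: add_nonneg_eq_0_iff)
  ultimately show False
    using ideal_nonvanishing_eq_carrier[OF assms(1)] assms(2) by blast
qed

theorem mainTheorem20:
  assumes "maximalideal M B1"
  shows "(real_ideal M \<longleftrightarrow> fixed_ideal M)
       \<and> (fixed_ideal M \<longleftrightarrow> (\<exists>p::real. M = {f \<in> baire_one. f p = 0}))"
proof -
  interpret maximalideal M B1 by (rule assms)
  have "real_ideal M \<Longrightarrow> fixed_ideal M"
    using real_ideal_imp_fixed[OF is_ideal I_notcarr[symmetric]] .
  moreover have "fixed_ideal M \<Longrightarrow> real_ideal M"
    using maximalideal_fixed_iff_point_ideal[OF assms] real_ideal_point_ideal by auto
  ultimately show ?thesis
    using maximalideal_fixed_iff_point_ideal[OF assms] by (auto simp: point_ideal_def)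
qed

end
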